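(* Let $(G=(V,E),k,\ell)$ be an instance of Almost Forest Deletion. Construct $(G'=(V',E'),R,k',\ell')$ as follows: start with $V'=V$, $E'=\varnothing$, $R=\varnothing$; for each edge $e=(u,v)\in E$ add a new vertex $v_e$ to $V'$ and to $R$ and add the edges $(u,v_e)$ and $(v_e,v)$ to $E'$ (i.e. subdivide $e$); set $k'=k$, $\ell'=\ell$. Then $(G',R,k',\ell')$ is an instance of Restricted Independent Almost Forest Deletion equivalent to $(G,k,\ell)$.
   Context: A graph is an $\ell$-forest if deleting at most $\ell$ of its edges yields a forest. Almost Forest Deletion: given a graph $G$ and integers $k,\ell\ge0$, decide whether there is $S\subseteq V(G)$ with $|S|\le k$ such that $G-S$ is an $\ell$-forest. Restricted Independent Almost Forest Deletion: given a graph $G$, a set $R\subseteq V(G)$ and integers $k,\ell\ge 0$, decide whether there is a set $S\subseteq V(G)\setminus R$ with $|S|\le k$ such that $S$ is an independent set in $G$ and $G-S$ is an $\ell$-forest. *)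

theory Defs
  imports Main
begin

definition simple_graph :: "'a set \<Rightarrow> 'a set set \<Rightarrow> bool" where
  "simple_graph V E \<longleftrightarrow> finite V \<and>
     (\<forall>e\<in>E. \<exists>u v. e = {u, v} \<and> u \<noteq> v \<and> u \<in> V \<and> v \<in> V)"

definition is_cycle :: "'a set \<Rightarrow> 'a set set \<Rightarrow> 'a list \<Rightarrow> bool" where
  "is_cycle V E xs \<longleftrightarrow> length xs \<ge> 3 \<and> distinct xs \<and> set xs \<subseteq> V \<and>
     (\<forall>i < length xs. {xs ! i, xs ! ((i + 1) mod length xs)} \<in> E)"

definition forest :: "'a set \<Rightarrow> 'a set set \<Rightarrow> bool" where
  "forest V E \<longleftrightarrow> \<not> (\<exists>xs. is_cycle V E xs)"

definition l_forest :: "nat \<Rightarrow> 'a set \<Rightarrow> 'a set set \<Rightarrow> bool" where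
  "l_forest l V E \<longleftrightarrow> (\<exists>F \<subseteq> E. card F \<le> l \<and> forest V (E - F))"

definition del_edges :: "'a set set \<Rightarrow> 'a set \<Rightarrow> 'a set set" where
  "del_edges E S = {e \<in> E. e \<inter> S = {}}"

definition independent :: "'a set set \<Rightarrow> 'a set \<Rightarrow> bool" where
  "independent E S \<longleftrightarrow> (\<forall>u\<in>S. \<forall>v\<in>S. {u, v} \<notin> E)"

definition almost_forest_deletion :: "'a set \<Rightarrow> 'a set set \<Rightarrow> nat \<Rightarrow> nat \<Rightarrow> bool" where
  "almost_forest_deletion V E k l \<longleftrightarrow>
     (\<exists>S \<subseteq> V. card S \<le> k \<and> l_forest l (V - S) (del_edges E S))"

definition restr_indep_afd :: "'a set \<Rightarrow> 'a set set \<Rightarrow> 'a set \<Rightarrow> nat \<Rightarrow> nat \<Rightarrow> bool" where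
  "restr_indep_afd V E R k l \<longleftrightarrow>
     (\<exists>S \<subseteq> V - R. card S \<le> k \<and> independent E S \<and> l_forest l (V - S) (del_edges E S))"

text \<open>The subdivision construction: original vertices are tagged Inl, the new vertex v_e is Inr e.\<close>
definition subdiv_V :: "'a set \<Rightarrow> 'a set set \<Rightarrow> ('a + 'a set) set" where
  "subdiv_V V E = Inl ` V \<union> Inr ` E"

definition subdiv_E :: "'a set set \<Rightarrow> ('a + 'a set) set set" where
  "subdiv_E E = {{Inl u, Inr e} | u e. e \<in> E \<and> u \<in> e}"

definition subdiv_R :: "'a set set \<Rightarrow> ('a + 'a set) set" where
  "subdiv_R E = Inr ` E"

end

theory Submission
  imports Defs
begin

text \<open>
  Every edge of the subdivision joins an original vertex \<open>Inl u\<close> to a subdivision vertex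
  \<open>Inr e\<close>, so a cycle of the subdivision alternates between the two kinds and is exactly the
  subdivision \<open>u\<^sub>0 e\<^sub>0 u\<^sub>1 e\<^sub>1 \<dots>\<close> of a cycle \<open>u\<^sub>0 u\<^sub>1 \<dots>\<close> of the original graph
  (of length at least 3, as there are no parallel edges). More generally, for any subgraph
  of the subdivision the cycles correspond to the cycles formed by the original edges both
  of whose halves are still present.

  A solution \<open>S\<close> of the restricted instance avoids the subdivision vertices, so it consists of
  original vertices and is automatically independent. Deleting a set \<open>F\<close> of edges of
  \<open>G - S\<close> then corresponds to deleting one half of each edge of \<open>F\<close>; conversely, deleting a
  set \<open>F'\<close> of half-edges destroys the same cycles as deleting the at most \<open>|F'|\<close> original
  edges they belong to.
\<close>

lemma is_cycle_rotate:
  assumes "is_cycle V E xs"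
  shows "is_cycle V E (rotate r xs)"
proof -
  let ?n = "length xs"
  have "{rotate r xs ! i, rotate r xs ! ((i + 1) mod ?n)} \<in> E" if "i < ?n" for i
  proof -
    let ?j = "(r + i) mod ?n"
    have "(i + 1) mod ?n < ?n"
      using that by (auto intro!: mod_less_divisor)
    then have "rotate r xs ! i = xs ! ?j" "rotate r xs ! ((i + 1) mod ?n) = xs ! ((?j + 1) mod ?n)"
      using that by (simp_all only: nth_rotate) (simp_all add: mod_simps)
    moreover have "?j < ?n"
      using that by (auto intro!: mod_less_divisor)
    ultimately show ?thesis
      using assms by (simp add: is_cycle_def)
  qed
  then show ?thesis
    using assms by (simp add: is_cycle_def)
qed

lemma cyclic_pairs_inj:
  assumes "distinct xs" "length xs \<ge> 3" "i < length xs" "j < length xs"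
    and "{xs ! i, xs ! ((i + 1) mod length xs)} = {xs ! j, xs ! ((j + 1) mod length xs)}"
  shows "i = j"
proof (rule ccontr)
  let ?n = "length xs"
  assume "i \<noteq> j"
  have "(i + 1) mod ?n < ?n" "(j + 1) mod ?n < ?n"
    using assms(3) by (auto intro!: mod_less_divisor)
  moreover have "xs ! i \<noteq> xs ! j"
    using assms \<open>i \<noteq> j\<close> by (simp add: nth_eq_iff_index_eq)
  ultimately have "i = (j + 1) mod ?n" "(i + 1) mod ?n = j"
    using assms by (auto simp: doubleton_eq_iff nth_eq_iff_index_eq)
  show False
  proof (cases "i + 1 < ?n")
    case True
    then have "j = i + 1"
      using \<open>(i + 1) mod ?n = j\<close> by simp
    then have "i = (i + 2) mod ?n"
      using \<open>i = (j + 1) mod ?n\<close> by simp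
    moreover have "i + 2 = ?n" if "\<not> i + 2 < ?n"
      using True that by linarith
    ultimately show False
      using assms(2) by (cases "i + 2 < ?n") auto
  next
    case False
    then have "i + 1 = ?n"
      using assms(3) by linarith
    moreover have "j = 0"
      using \<open>i + 1 = ?n\<close> \<open>(i + 1) mod ?n = j\<close> by simp
    ultimately show False
      using \<open>i = (j + 1) mod ?n\<close> assms(2) by simp
  qed
qed

lemma alternating_cyclic_list_parity:
  fixes P :: "'a \<Rightarrow> bool"
  assumes "\<And>i. i < length xs \<Longrightarrow> P (xs ! i) \<noteq> P (xs ! ((i + 1) mod length xs))"
    and "i < length xs"
  shows "P (xs ! i) \<longleftrightarrow> (P (xs ! 0) \<longleftrightarrow> even i)"
  using assms(2)
proof (induction i)
  case (Suc i)
  then have "P (xs ! Suc i) \<longleftrightarrow> \<not> P (xs ! i)"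
    using assms(1)[of i] by simp
  then show ?case
    using Suc by simp
qed simp

lemma alternating_cyclic_list_even:
  fixes P :: "'a \<Rightarrow> bool"
  assumes "\<And>i. i < length xs \<Longrightarrow> P (xs ! i) \<noteq> P (xs ! ((i + 1) mod length xs))"
  shows "even (length xs)"
proof (cases "xs = []")
  case False
  let ?n = "length xs"
  have "P (xs ! (?n - 1)) \<noteq> P (xs ! 0)"
    using assms[of "?n - 1"] False by simp
  moreover have "P (xs ! (?n - 1)) \<longleftrightarrow> (P (xs ! 0) \<longleftrightarrow> even (?n - 1))"
    using alternating_cyclic_list_parity[of xs P "?n - 1", OF assms] False by simp
  ultimately show ?thesis
    using False by (cases "P (xs ! 0)") simp_all
qed simp

fun interleave :: "'a list \<Rightarrow> 'b list \<Rightarrow> ('a + 'b) list" where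
  "interleave (x # xs) (e # es) = Inl x # Inr e # interleave xs es"
| "interleave _ _ = []"

lemma length_interleave [simp]:
  "length (interleave xs es) = 2 * min (length xs) (length es)"
  by (induction xs es rule: interleave.induct) auto

lemma set_interleave:
  "length xs = length es \<Longrightarrow> set (interleave xs es) = Inl ` set xs \<union> Inr ` set es"
  by (induction xs es rule: interleave.induct) auto

lemma distinct_interleave:
  "length xs = length es \<Longrightarrow> distinct (interleave xs es) \<longleftrightarrow> distinct xs \<and> distinct es"
  by (induction xs es rule: interleave.induct) (auto simp: set_interleave)

lemma nth_interleave:
  assumes "length xs = length es" "j < length xs"
  shows "interleave xs es ! (2 * j) = Inl (xs ! j)"
    and "interleave xs es ! Suc (2 * j) = Inr (es ! j)"
  using assms by (induction xs es arbitrary: j rule: interleave.induct) (auto simp: less_Suc_eq_0_disj)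

lemma all_less_double:
  "(\<forall>k < 2 * (m :: nat). P k) \<longleftrightarrow> (\<forall>j < m. P (2 * j) \<and> P (2 * j + 1))"
proof safe
  fix k assume "\<forall>j < m. P (2 * j) \<and> P (2 * j + 1)" "k < 2 * m"
  moreover have "k div 2 < m"
    using \<open>k < 2 * m\<close> by simp
  moreover have "k = 2 * (k div 2) \<or> k = 2 * (k div 2) + 1"
    by presburger
  ultimately show "P k"
    by metis
qed auto

lemma is_cycle_interleave:
  assumes "length xs = length es"
  shows "is_cycle W H (interleave xs es) \<longleftrightarrow>
    2 \<le> length xs \<and> distinct xs \<and> distinct es \<and> Inl ` set xs \<subseteq> W \<and> Inr ` set es \<subseteq> W \<and>
    (\<forall>j < length xs. {Inl (xs ! j), Inr (es ! j)} \<in> H \<and>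
      {Inr (es ! j), Inl (xs ! ((j + 1) mod length xs))} \<in> H)"
proof -
  let ?ys = "interleave xs es" and ?m = "length xs"
  have "{?ys ! (2 * j), ?ys ! ((2 * j + 1) mod (2 * ?m))} = {Inl (xs ! j), Inr (es ! j)}"
    and "{?ys ! (2 * j + 1), ?ys ! ((2 * j + 1 + 1) mod (2 * ?m))} =
      {Inr (es ! j), Inl (xs ! ((j + 1) mod ?m))}"
    if "j < ?m" for j
  proof -
    have "(2 * j + 1 + 1) mod (2 * ?m) = 2 * ((j + 1) mod ?m)"
      by (metis add_mult_distrib2 mod_mult_mult1 mult_1_right one_add_one add.assoc)
    moreover have "(j + 1) mod ?m < ?m"
      using that by (auto intro!: mod_less_divisor)
    ultimately show "{?ys ! (2 * j), ?ys ! ((2 * j + 1) mod (2 * ?m))} = {Inl (xs ! j), Inr (es ! j)}"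
      and "{?ys ! (2 * j + 1), ?ys ! ((2 * j + 1 + 1) mod (2 * ?m))} =
        {Inr (es ! j), Inl (xs ! ((j + 1) mod ?m))}"
      using that assms by (simp_all add: nth_interleave)
  qed
  moreover have "3 \<le> 2 * ?m \<longleftrightarrow> 2 \<le> ?m"
    by arith
  ultimately show ?thesis
    using assms unfolding is_cycle_def
    by (simp add: distinct_interleave set_interleave all_less_double cong: conj_cong)
qed

lemma half_edge_in_subdiv_E [simp]:
  "{Inl u, Inr e} \<in> subdiv_E E \<longleftrightarrow> e \<in> E \<and> u \<in> e"
  by (auto simp: subdiv_E_def doubleton_eq_iff)

lemma subdiv_E_alternates:
  "{x, y} \<in> subdiv_E E \<Longrightarrow> isl x \<noteq> isl y"
  by (auto simp: subdiv_E_def doubleton_eq_iff)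

lemma subdiv_E_Inr_unique:
  "f \<in> subdiv_E E \<Longrightarrow> Inr a \<in> f \<Longrightarrow> Inr b \<in> f \<Longrightarrow> a = b"
  by (auto simp: subdiv_E_def)

definition intact_edges :: "'a set set \<Rightarrow> ('a + 'a set) set set \<Rightarrow> 'a set set" where
  "intact_edges E H = {e \<in> E. \<forall>u \<in> e. {Inl u, Inr e} \<in> H}"

lemma subdivide_cycle:
  assumes cycle: "is_cycle (Inl -` W) (intact_edges E H) xs"
    and mid: "Inr ` intact_edges E H \<subseteq> W"
  shows "\<exists>ys. is_cycle W H ys"
proof -
  let ?m = "length xs"
  define es where "es = map (\<lambda>j. {xs ! j, xs ! ((j + 1) mod ?m)}) [0..<?m]"
  have m: "?m \<ge> 3" and "distinct xs" "Inl ` set xs \<subseteq> W"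
    and intact: "\<And>j. j < ?m \<Longrightarrow> es ! j \<in> intact_edges E H"
    using cycle by (auto simp: is_cycle_def es_def)
  have "distinct es"
    using cyclic_pairs_inj[OF \<open>distinct xs\<close> m]
    by (auto simp: es_def distinct_map inj_on_def)
  moreover have "Inr ` set es \<subseteq> W"
    using intact mid by (auto simp: in_set_conv_nth es_def)
  moreover have "{Inl (xs ! j), Inr (es ! j)} \<in> H \<and> {Inr (es ! j), Inl (xs ! ((j + 1) mod ?m))} \<in> H"
    if "j < ?m" for j
    using intact[OF that] that by (auto simp: intact_edges_def es_def insert_commute)
  ultimately have "is_cycle W H (interleave xs es)"
    using m \<open>distinct xs\<close> \<open>Inl ` set xs \<subseteq> W\<close> by (simp add: is_cycle_interleave es_def)
  then show ?thesis ..
qed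

lemma subdivision_cycle_alternates:
  assumes "H \<subseteq> subdiv_E E" "is_cycle W H ys" "k < length ys"
  shows "isl (ys ! k) \<noteq> isl (ys ! ((k + 1) mod length ys))"
proof -
  have "{ys ! k, ys ! ((k + 1) mod length ys)} \<in> subdiv_E E"
    using assms by (auto simp: is_cycle_def)
  then show ?thesis
    by (rule subdiv_E_alternates)
qed

lemma alternating_list_interleave:
  assumes "\<And>k. k < length ys \<Longrightarrow> isl (ys ! k) \<longleftrightarrow> even k" and "even (length ys)"
  obtains xs es where "length xs = length es" "ys = interleave xs es"
proof
  define m where "m = length ys div 2"
  define xs where "xs = map (\<lambda>j. projl (ys ! (2 * j))) [0..<m]"
  define es where "es = map (\<lambda>j. projr (ys ! Suc (2 * j))) [0..<m]"
  show "length xs = length es"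
    by (simp add: xs_def es_def)
  show "ys = interleave xs es"
  proof (rule nth_equalityI)
    show "length ys = length (interleave xs es)"
      using assms(2) by (simp add: xs_def es_def m_def)
    fix k assume k: "k < length ys"
    then have j: "k div 2 < length xs"
      using assms(2) by (auto simp: xs_def m_def elim!: evenE)
    have len: "length xs = length es"
      by (simp add: xs_def es_def)
    consider "2 * (k div 2) = k" "even k" | "Suc (2 * (k div 2)) = k" "odd k"
      by (metis dvd_mult_div_cancel odd_two_times_div_two_succ Suc_eq_plus1)
    then show "ys ! k = interleave xs es ! k"
    proof cases
      case 1
      then show ?thesis
        using nth_interleave(1)[OF len j] assms(1)[OF k] j by (simp add: xs_def)
    next
      case 2
      then show ?thesis
        using nth_interleave(2)[OF len j] assms(1)[OF k] j by (simp add: es_def xs_def)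
    qed
  qed
qed

lemma intact_edge_of_halves:
  assumes "\<And>e. e \<in> E \<Longrightarrow> card e = 2" "H \<subseteq> subdiv_E E"
    and "{Inl a, Inr e} \<in> H" "{Inr e, Inl b} \<in> H" "a \<noteq> b"
  shows "e = {a, b}" "e \<in> intact_edges E H"
proof -
  have "e \<in> E" "a \<in> e" "b \<in> e"
    using assms(2-4) by (auto simp: insert_commute)
  moreover obtain x y where "e = {x, y}"
    using assms(1) \<open>e \<in> E\<close> card_2_iff by metis
  ultimately show "e = {a, b}"
    using assms(5) by auto
  then show "e \<in> intact_edges E H"
    using assms(3,4) \<open>e \<in> E\<close> by (auto simp: intact_edges_def insert_commute)
qed

lemma contract_cycle_from_Inl:
  assumes E: "\<And>e. e \<in> E \<Longrightarrow> card e = 2" and H: "H \<subseteq> subdiv_E E"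
    and cycle: "is_cycle W H ys" and "isl (ys ! 0)"
  shows "\<exists>xs. is_cycle (Inl -` W) (intact_edges E H) xs"
proof -
  note alt = subdivision_cycle_alternates[OF H cycle]
  have "isl (ys ! k) \<longleftrightarrow> even k" if "k < length ys" for k
    using alternating_cyclic_list_parity[of ys isl, OF alt that] \<open>isl (ys ! 0)\<close> by simp
  then obtain xs es where len: "length xs = length es" and ys: "ys = interleave xs es"
    using alternating_list_interleave alternating_cyclic_list_even[OF alt] by blast
  let ?m = "length xs"
  have m: "?m \<ge> 2" "distinct xs" "distinct es" "Inl ` set xs \<subseteq> W"
    and halves: "\<And>j. j < ?m \<Longrightarrow>
      {Inl (xs ! j), Inr (es ! j)} \<in> H \<and> {Inr (es ! j), Inl (xs ! ((j + 1) mod ?m))} \<in> H"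
    using cycle unfolding ys is_cycle_interleave[OF len] by auto
  have es: "es ! j = {xs ! j, xs ! ((j + 1) mod ?m)} \<and> es ! j \<in> intact_edges E H"
    if "j < ?m" for j
  proof -
    have "j \<noteq> (j + 1) mod ?m" "(j + 1) mod ?m < ?m"
      using m(1) that by (auto simp: mod_if)
    then have "xs ! j \<noteq> xs ! ((j + 1) mod ?m)"
      using m(2) that by (simp add: nth_eq_iff_index_eq)
    then show ?thesis
      using intact_edge_of_halves[OF E H] halves[OF that] by blast
  qed
  \<comment> \<open>For \<open>m = 2\<close> the two subdivision vertices would subdivide the same edge.\<close>
  have "?m \<noteq> 2"
  proof
    assume "?m = 2"
    then have "es ! 0 = es ! 1"
      using es[of 0] es[of 1] by (simp add: insert_commute)
    then show False
      using m(3) len \<open>?m = 2\<close> by (simp add: nth_eq_iff_index_eq)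
  qed
  moreover have "\<forall>j < ?m. {xs ! j, xs ! ((j + 1) mod ?m)} \<in> intact_edges E H"
    using es by metis
  ultimately have "is_cycle (Inl -` W) (intact_edges E H) xs"
    using m by (auto simp: is_cycle_def)
  then show ?thesis ..
qed

lemma contract_cycle:
  assumes "\<And>e. e \<in> E \<Longrightarrow> card e = 2" "H \<subseteq> subdiv_E E" "is_cycle W H ys"
  shows "\<exists>xs. is_cycle (Inl -` W) (intact_edges E H) xs"
proof (cases "isl (ys ! 0)")
  case False
  have "length ys > 0"
    using assms(3) by (auto simp: is_cycle_def)
  then have "rotate 1 ys ! 0 = ys ! ((0 + 1) mod length ys)"
    using nth_rotate[of 0 ys 1] by simp
  then have "isl (rotate 1 ys ! 0)"
    using False subdivision_cycle_alternates[OF assms(2,3) \<open>length ys > 0\<close>] by simp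
  then show ?thesis
    using contract_cycle_from_Inl[OF assms(1,2) is_cycle_rotate[OF assms(3)]] by blast
qed (use contract_cycle_from_Inl[OF assms] in blast)

lemma forest_subdivision_iff:
  assumes "\<And>e. e \<in> E \<Longrightarrow> card e = 2" "H \<subseteq> subdiv_E E" "Inr ` E \<subseteq> W"
  shows "forest W H \<longleftrightarrow> forest (Inl -` W) (intact_edges E H)"
proof -
  have "Inr ` intact_edges E H \<subseteq> W"
    using assms(3) by (auto simp: intact_edges_def)
  then have "(\<exists>ys. is_cycle W H ys) \<longleftrightarrow> (\<exists>xs. is_cycle (Inl -` W) (intact_edges E H) xs)"
    using subdivide_cycle contract_cycle[OF assms(1,2)] by (meson exE)
  then show ?thesis
    by (simp add: forest_def)
qed

lemma simple_graph_card_edge: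
  "simple_graph V E \<Longrightarrow> e \<in> E \<Longrightarrow> card e = 2"
  by (auto simp: simple_graph_def)

lemma simple_graph_finite_edges:
  assumes "simple_graph V E"
  shows "finite E"
proof (rule finite_subset)
  show "E \<subseteq> Pow V"
    using assms by (auto simp: simple_graph_def)
  show "finite (Pow V)"
    using assms by (simp add: simple_graph_def)
qed

lemma simple_graph_subdivision:
  assumes "simple_graph V E"
  shows "simple_graph (subdiv_V V E) (subdiv_E E)"
proof -
  have "finite (subdiv_V V E)"
    using assms simple_graph_finite_edges by (auto simp: simple_graph_def subdiv_V_def)
  moreover have "e \<subseteq> V" if "e \<in> E" for e
    using assms that by (auto simp: simple_graph_def)
  ultimately show ?thesis
    by (fastforce simp: simple_graph_def subdiv_V_def subdiv_E_def)
qed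

lemma independent_subdiv_Inl: "independent (subdiv_E E) (Inl ` S)"
  by (auto simp: independent_def dest: subdiv_E_alternates)

lemma intact_edges_del_edges:
  assumes "F' \<subseteq> subdiv_E E"
  shows "intact_edges E (del_edges (subdiv_E E) (Inl ` S) - F') = del_edges E S - Inr -` \<Union>F'"
  using assms by (fastforce simp: intact_edges_def del_edges_def subdiv_E_def doubleton_eq_iff)

lemma forest_subdivision_del_edges:
  assumes "simple_graph V E" "F' \<subseteq> subdiv_E E"
  shows "forest (subdiv_V V E - Inl ` S) (del_edges (subdiv_E E) (Inl ` S) - F') \<longleftrightarrow>
    forest (V - S) (del_edges E S - Inr -` \<Union>F')"
proof -
  have "forest (subdiv_V V E - Inl ` S) (del_edges (subdiv_E E) (Inl ` S) - F') \<longleftrightarrow>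
    forest (Inl -` (subdiv_V V E - Inl ` S)) (intact_edges E (del_edges (subdiv_E E) (Inl ` S) - F'))"
    by (rule forest_subdivision_iff)
      (auto simp: simple_graph_card_edge[OF assms(1)] del_edges_def subdiv_V_def)
  moreover have "Inl -` (subdiv_V V E - Inl ` S) = V - S"
    by (auto simp: subdiv_V_def)
  ultimately show ?thesis
    by (simp add: intact_edges_del_edges[OF assms(2)])
qed

lemma obtain_half_edges:
  assumes "F \<subseteq> del_edges E S" "finite F" "{} \<notin> F"
  obtains F' where "F' \<subseteq> del_edges (subdiv_E E) (Inl ` S)" "Inr -` \<Union>F' = F" "card F' \<le> card F"
proof
  define F' where "F' = (\<lambda>e. {Inl (SOME u. u \<in> e), Inr e}) ` F"
  show "F' \<subseteq> del_edges (subdiv_E E) (Inl ` S)"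
  proof
    fix f assume "f \<in> F'"
    then obtain e where e: "e \<in> F" "f = {Inl (SOME u. u \<in> e), Inr e}"
      by (auto simp: F'_def)
    moreover have "(SOME u. u \<in> e) \<in> e"
      using assms(3) e(1) by (auto simp: some_in_eq)
    ultimately show "f \<in> del_edges (subdiv_E E) (Inl ` S)"
      using assms(1) by (auto simp: del_edges_def)
  qed
  show "Inr -` \<Union>F' = F"
    by (auto simp: F'_def)
  show "card F' \<le> card F"
    unfolding F'_def using assms(2) by (rule card_image_le)
qed

lemma card_vimage_Inr_le:
  assumes "F' \<subseteq> subdiv_E E" "finite F'"
  shows "card (A \<inter> Inr -` \<Union>F') \<le> card F'"
proof (rule card_le_if_inj_on_rel[where r = "\<lambda>e f. Inr e \<in> f"])
  fix a1 a2 f assume "f \<in> F'" "Inr a1 \<in> f" "Inr a2 \<in> f"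
  then show "a1 = a2"
    using assms(1) subdiv_E_Inr_unique by blast
qed (use assms in auto)

lemma almost_forest_deletion_imp_restr_indep_afd:
  assumes "simple_graph V E" "almost_forest_deletion V E k l"
  shows "restr_indep_afd (subdiv_V V E) (subdiv_E E) (subdiv_R E) k l"
proof -
  obtain S where S: "S \<subseteq> V" "card S \<le> k" and "l_forest l (V - S) (del_edges E S)"
    using assms(2) unfolding almost_forest_deletion_def by blast
  then obtain F where F: "F \<subseteq> del_edges E S" "card F \<le> l" "forest (V - S) (del_edges E S - F)"
    unfolding l_forest_def by blast
  have "F \<subseteq> E"
    using F(1) by (auto simp: del_edges_def)
  then have "finite F" "{} \<notin> F"
    using simple_graph_finite_edges[OF assms(1)] simple_graph_card_edge[OF assms(1), of "{}"]
    by (auto intro: finite_subset)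
  then obtain F' where F': "F' \<subseteq> del_edges (subdiv_E E) (Inl ` S)" "Inr -` \<Union>F' = F"
    "card F' \<le> card F"
    using obtain_half_edges[OF F(1)] by blast
  have "F' \<subseteq> subdiv_E E"
    using F'(1) by (auto simp: del_edges_def)
  then have "forest (subdiv_V V E - Inl ` S) (del_edges (subdiv_E E) (Inl ` S) - F')"
    using forest_subdivision_del_edges[OF assms(1)] F'(2) F(3) by simp
  moreover have "card F' \<le> l"
    using F(2) F'(3) by linarith
  ultimately have "l_forest l (subdiv_V V E - Inl ` S) (del_edges (subdiv_E E) (Inl ` S))"
    unfolding l_forest_def using F'(1) by (intro exI[of _ F'] conjI)
  moreover have "Inl ` S \<subseteq> subdiv_V V E - subdiv_R E"
    using S(1) by (auto simp: subdiv_V_def subdiv_R_def)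
  moreover have "card (Inl ` S) \<le> k"
    using S(2) by (simp add: card_image)
  ultimately show ?thesis
    unfolding restr_indep_afd_def
    by (intro exI[of _ "Inl ` S"] conjI independent_subdiv_Inl)
qed

lemma restr_indep_afd_imp_almost_forest_deletion:
  assumes "simple_graph V E" "restr_indep_afd (subdiv_V V E) (subdiv_E E) (subdiv_R E) k l"
  shows "almost_forest_deletion V E k l"
proof -
  obtain S' where S': "S' \<subseteq> subdiv_V V E - subdiv_R E" "card S' \<le> k"
    and "l_forest l (subdiv_V V E - S') (del_edges (subdiv_E E) S')"
    using assms(2) unfolding restr_indep_afd_def by blast
  then obtain F' where F': "F' \<subseteq> del_edges (subdiv_E E) S'" "card F' \<le> l"
      "forest (subdiv_V V E - S') (del_edges (subdiv_E E) S' - F')"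
    unfolding l_forest_def by blast
  define S where "S = Inl -` S'"
  have S'_eq: "S' = Inl ` S"
    using S'(1) by (auto simp: S_def subdiv_V_def subdiv_R_def)
  have F'_sub: "F' \<subseteq> subdiv_E E"
    using F'(1) by (auto simp: del_edges_def)
  define F where "F = del_edges E S \<inter> Inr -` \<Union>F'"
  have "finite F'"
    using F'_sub simple_graph_finite_edges[OF simple_graph_subdivision[OF assms(1)]]
    by (rule finite_subset)
  then have "card F \<le> l"
    using card_vimage_Inr_le[OF F'_sub] F'(2) unfolding F_def by (meson le_trans)
  moreover have "F \<subseteq> del_edges E S"
    by (simp add: F_def)
  moreover have "del_edges E S - F = del_edges E S - Inr -` \<Union>F'"
    by (auto simp: F_def)
  then have "forest (V - S) (del_edges E S - F)"
    using F'(3) forest_subdivision_del_edges[OF assms(1) F'_sub] by (simp add: S'_eq)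
  ultimately have "l_forest l (V - S) (del_edges E S)"
    unfolding l_forest_def by (intro exI[of _ F] conjI)
  moreover have "S \<subseteq> V"
    using S'(1) by (auto simp: S_def subdiv_V_def)
  moreover have "card S \<le> k"
    using S'(2) by (simp add: S'_eq card_image)
  ultimately show ?thesis
    unfolding almost_forest_deletion_def by (intro exI[of _ S] conjI)
qed

theorem lemma12:
  fixes V :: "'a set" and E :: "'a set set" and k l :: nat
  assumes "simple_graph V E"
  shows "simple_graph (subdiv_V V E) (subdiv_E E) \<and> subdiv_R E \<subseteq> subdiv_V V E \<and>
    (almost_forest_deletion V E k l \<longleftrightarrow>
     restr_indep_afd (subdiv_V V E) (subdiv_E E) (subdiv_R E) k l)"
proof (intro conjI)
  show "simple_graph (subdiv_V V E) (subdiv_E E)"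
    using assms by (rule simple_graph_subdivision)
  show "subdiv_R E \<subseteq> subdiv_V V E"
    by (auto simp: subdiv_R_def subdiv_V_def)
  show "almost_forest_deletion V E k l \<longleftrightarrow>
    restr_indep_afd (subdiv_V V E) (subdiv_E E) (subdiv_R E) k l"
    using almost_forest_deletion_imp_restr_indep_afd[OF assms]
      restr_indep_afd_imp_almost_forest_deletion[OF assms] by blast
qed

end
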